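(* Let $\Lambda$ be a Kähler group, let $\rho:\Lambda\to\prod_{\alpha\in\mathfrak{U}}T_\alpha$ be its universal homomorphism, and let $\rho_{\mathrm{tf}}$ be its torsion-free universal homomorphism. Then $\ker(\rho)$ and $\ker(\rho_{\mathrm{tf}})$ are characteristic subgroups of $\Lambda$.
   Context: A Kähler group is the fundamental group of a compact Kähler manifold. For a Kähler group $\Lambda$ there is a (possibly empty) finite collection of cocompact Fuchsian groups $\{T_\alpha\}_{\alpha\in\mathfrak{U}}$ and a homomorphism $\rho:\Lambda\to T=\prod_{\alpha\in\mathfrak{U}}T_\alpha$ (the universal homomorphism; the $T_\alpha$ are its direct factors) such that: (1) for each $\alpha$, with projection $p_\alpha:T\to T_\alpha$, the map $p_\alpha\circ\rho$ is surjective; (2) every surjective homomorphism from $\Lambda$ onto a cocompact Fuchsian group factors through some $p_\alpha\circ\rho$; (3) a surjective homomorphism $\sigma:\Lambda\to T'$ onto a cocompact Fuchsian group has finitely generated kernel if and only if there exist $\alpha\in\mathfrak{U}$ and an isomorphism $\psi:T_\alpha\to T'$ with $\sigma=\psi\circ p_\alpha\circ\rho$. (If $\mathfrak{U}=\varnothing$, $\rho$ is the trivial map to the trivial group.) Let $\mathfrak{U}_{\mathrm{tf}}\subseteq\mathfrak{U}$ be the set of $\alpha$ for which $T_\alpha$ is torsion-free (i.e., a surface group of genus $\ge2$); the torsion-free universal homomorphism is $\rho_{\mathrm{tf}}:\Lambda\to\prod_{\alpha\in\mathfrak{U}_{\mathrm{tf}}}T_\alpha$, the composition of $\rho$ with the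 projection onto these factors. *)

theory Defs
  imports "HOL-Analysis.Analysis" "HOL-Algebra.Algebra"
begin

definition SL2 :: "(real^2^2) set" where
  "SL2 = {A. det A = 1}"

definition psl_class :: "real^2^2 \<Rightarrow> (real^2^2) set" where
  "psl_class A = {A, - A}"

definition PSL2 :: "(real^2^2) set monoid" where
  "PSL2 = \<lparr> carrier = psl_class ` SL2,
            monoid.mult = (\<lambda>P Q. {matrix_matrix_mult a b | a b. a \<in> P \<and> b \<in> Q}),
            one = psl_class (mat 1) \<rparr>"

definition Fuchs :: "(real^2^2) set set \<Rightarrow> (real^2^2) set monoid" where
  "Fuchs \<Gamma> = PSL2\<lparr>carrier := \<Gamma>\<rparr>"

text \<open>Discrete: the preimage of the subgroup in SL(2,R) is a discrete subset.
  Cocompact: SL(2,R) = K \<cdot> (preimage) for some compact K, i.e. the quotient is compact.\<close>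
definition cocompact_fuchsian :: "(real^2^2) set set \<Rightarrow> bool" where
  "cocompact_fuchsian \<Gamma> \<longleftrightarrow>
     subgroup \<Gamma> PSL2 \<and>
     (\<forall>A\<in>\<Union>\<Gamma>. \<exists>e>0. ball A e \<inter> \<Union>\<Gamma> = {A}) \<and>
     (\<exists>K. compact K \<and> K \<subseteq> SL2 \<and> SL2 \<subseteq> {matrix_matrix_mult k g | k g. k \<in> K \<and> g \<in> \<Union>\<Gamma>})"

definition torsion_free :: "('a, 'b) monoid_scheme \<Rightarrow> bool" where
  "torsion_free G \<longleftrightarrow>
     (\<forall>x\<in>carrier G. \<forall>n::nat. n > 0 \<and> x [^]\<^bsub>G\<^esub> n = \<one>\<^bsub>G\<^esub> \<longrightarrow> x = \<one>\<^bsub>G\<^esub>)"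

definition finitely_generated_subgroup :: "('a, 'b) monoid_scheme \<Rightarrow> 'a set \<Rightarrow> bool" where
  "finitely_generated_subgroup G H \<longleftrightarrow> (\<exists>S. finite S \<and> S \<subseteq> H \<and> generate G S = H)"

definition characteristic_subgroup :: "('a, 'b) monoid_scheme \<Rightarrow> 'a set \<Rightarrow> bool" where
  "characteristic_subgroup G H \<longleftrightarrow> subgroup H G \<and> (\<forall>\<phi>\<in>iso G G. \<phi> ` H = H)"

definition target_group :: "'i set \<Rightarrow> ('i \<Rightarrow> (real^2^2) set set) \<Rightarrow> ('i \<Rightarrow> (real^2^2) set) monoid" where
  "target_group U T = product_group U (\<lambda>\<alpha>. Fuchs (T \<alpha>))"

definition universal_hom ::
  "('a, 'b) monoid_scheme \<Rightarrow> 'i set \<Rightarrow> ('i \<Rightarrow> (real^2^2) set set) \<Rightarrow> ('a \<Rightarrow> 'i \<Rightarrow> (real^2^2) set) \<Rightarrow> bool" where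
  "universal_hom G U T \<rho> \<longleftrightarrow>
     finite U \<and>
     (\<forall>\<alpha>\<in>U. cocompact_fuchsian (T \<alpha>)) \<and>
     \<rho> \<in> hom G (target_group U T) \<and>
     (\<forall>\<alpha>\<in>U. (\<lambda>x. \<rho> x \<alpha>) ` carrier G = T \<alpha>) \<and>
     (\<forall>\<Gamma> \<sigma>. cocompact_fuchsian \<Gamma> \<and> \<sigma> \<in> epi G (Fuchs \<Gamma>) \<longrightarrow>
        (\<exists>\<alpha>\<in>U. \<exists>h\<in>hom (Fuchs (T \<alpha>)) (Fuchs \<Gamma>). \<forall>x\<in>carrier G. \<sigma> x = h (\<rho> x \<alpha>))) \<and>
     (\<forall>\<Gamma> \<sigma>. cocompact_fuchsian \<Gamma> \<and> \<sigma> \<in> epi G (Fuchs \<Gamma>) \<longrightarrow>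
        (finitely_generated_subgroup G (kernel G (Fuchs \<Gamma>) \<sigma>) \<longleftrightarrow>
         (\<exists>\<alpha>\<in>U. \<exists>\<psi>\<in>iso (Fuchs (T \<alpha>)) (Fuchs \<Gamma>). \<forall>x\<in>carrier G. \<sigma> x = \<psi> (\<rho> x \<alpha>))))"

definition tf_index :: "'i set \<Rightarrow> ('i \<Rightarrow> (real^2^2) set set) \<Rightarrow> 'i set" where
  "tf_index U T = {\<alpha>\<in>U. torsion_free (Fuchs (T \<alpha>))}"

definition tf_hom :: "'i set \<Rightarrow> ('i \<Rightarrow> (real^2^2) set set) \<Rightarrow> ('a \<Rightarrow> 'i \<Rightarrow> (real^2^2) set) \<Rightarrow> 'a \<Rightarrow> 'i \<Rightarrow> (real^2^2) set" where
  "tf_hom U T \<rho> = (\<lambda>x. restrict (\<rho> x) (tf_index U T))"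

end

theory Submission
  imports Defs
begin

text \<open>An automorphism \<open>\<phi>\<close> of \<open>\<Lambda>\<close> permutes the coordinate maps \<open>\<rho>\<^sub>\<alpha>\<close> up to isomorphisms of
  the factors: \<open>\<rho>\<^sub>\<alpha> \<circ> \<phi>\<close> is again a surjection onto a cocompact Fuchsian group, and its kernel
  \<open>\<phi>\<inverse>(ker \<rho>\<^sub>\<alpha>)\<close> is finitely generated because \<open>ker \<rho>\<^sub>\<alpha>\<close> is. By the characterisation of such
  surjections, \<open>\<rho>\<^sub>\<alpha> \<circ> \<phi> = \<psi> \<circ> \<rho>\<^sub>\<beta>\<close> for some \<open>\<beta>\<close> and some isomorphism \<open>\<psi> : T\<^sub>\<beta> \<rightarrow> T\<^sub>\<alpha>\<close>.
  Hence \<open>\<phi>\<close> maps \<open>ker \<rho> = \<Inter>\<^sub>\<alpha> ker \<rho>\<^sub>\<alpha>\<close> into itself, and likewise \<open>ker \<rho>\<^sub>t\<^sub>f\<close>, since a group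
  isomorphic to a torsion-free one is torsion-free. Applying this to \<open>\<phi>\<inverse>\<close> gives equality.\<close>

lemma matrix_mul_uminus_left: "(- A) ** B = - (A ** B)"
  for A :: "'a::ring_1^'n^'m" and B :: "'a^'p^'n"
  by (simp add: matrix_matrix_mult_def vec_eq_iff sum_negf)

lemma matrix_mul_uminus_right: "A ** (- B) = - (A ** B)"
  for A :: "'a::ring_1^'n^'m" and B :: "'a^'p^'n"
  by (simp add: matrix_matrix_mult_def vec_eq_iff sum_negf)

lemma PSL2_mult_psl_class: "psl_class A \<otimes>\<^bsub>PSL2\<^esub> psl_class B = psl_class (A ** B)"
  unfolding PSL2_def psl_class_def
  by (auto simp: matrix_mul_uminus_left matrix_mul_uminus_right) (metis matrix_mul_uminus_left)

lemma group_PSL2: "group PSL2"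
proof (rule groupI)
  show "\<one>\<^bsub>PSL2\<^esub> \<in> carrier PSL2" by (simp add: PSL2_def SL2_def)
next
  fix x y assume "x \<in> carrier PSL2" "y \<in> carrier PSL2"
  then obtain A B where "x = psl_class A" "y = psl_class B" "det A = 1" "det B = 1"
    by (auto simp: PSL2_def SL2_def)
  then show "x \<otimes>\<^bsub>PSL2\<^esub> y \<in> carrier PSL2"
    by (simp add: PSL2_mult_psl_class) (simp add: PSL2_def SL2_def det_mul)
next
  fix x y z assume "x \<in> carrier PSL2" "y \<in> carrier PSL2" "z \<in> carrier PSL2"
  then obtain A B C where "x = psl_class A" "y = psl_class B" "z = psl_class C"
    by (auto simp: PSL2_def SL2_def)
  then show "x \<otimes>\<^bsub>PSL2\<^esub> y \<otimes>\<^bsub>PSL2\<^esub> z = x \<otimes>\<^bsub>PSL2\<^esub> (y \<otimes>\<^bsub>PSL2\<^esub> z)"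
    by (simp add: PSL2_mult_psl_class matrix_mul_assoc)
next
  fix x assume "x \<in> carrier PSL2"
  then obtain A where "x = psl_class A" by (auto simp: PSL2_def SL2_def)
  then show "\<one>\<^bsub>PSL2\<^esub> \<otimes>\<^bsub>PSL2\<^esub> x = x"
    using PSL2_mult_psl_class[of "mat 1" A] by (simp add: PSL2_def)
next
  fix x assume "x \<in> carrier PSL2"
  then obtain A where A: "x = psl_class A" "det A = 1" by (auto simp: PSL2_def SL2_def)
  then obtain A' where A': "A' ** A = mat 1"
    using invertible_det_nz unfolding invertible_def by fastforce
  then have "det A' = 1" using det_mul[of A' A] A by simp
  then have "psl_class A' \<in> carrier PSL2" by (simp add: PSL2_def SL2_def)
  moreover have "psl_class A' \<otimes>\<^bsub>PSL2\<^esub> x = \<one>\<^bsub>PSL2\<^esub>"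
    using A A' by (simp add: PSL2_mult_psl_class) (simp add: PSL2_def)
  ultimately show "\<exists>y\<in>carrier PSL2. y \<otimes>\<^bsub>PSL2\<^esub> x = \<one>\<^bsub>PSL2\<^esub>" by blast
qed

lemma group_Fuchs: "cocompact_fuchsian \<Gamma> \<Longrightarrow> group (Fuchs \<Gamma>)"
  unfolding cocompact_fuchsian_def Fuchs_def
  using group_PSL2 subgroup.subgroup_is_group by blast

lemma carrier_Fuchs [simp]: "carrier (Fuchs \<Gamma>) = \<Gamma>"
  by (simp add: Fuchs_def)

lemma hom_product_group_component:
  assumes "f \<in> hom G (product_group I H)" "i \<in> I"
  shows "(\<lambda>x. f x i) \<in> hom G (H i)"
  using assms by (auto simp: hom_def PiE_iff)

lemma group_hom_restrict_product_group:
  assumes "group G" "\<And>i. i \<in> I \<Longrightarrow> group (H i)" "\<And>i. i \<in> I \<Longrightarrow> (\<lambda>x. f x i) \<in> hom G (H i)"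
  shows "group_hom G (product_group I H) (\<lambda>x. restrict (f x) I)"
proof -
  have "(\<lambda>x. restrict (f x) I) \<in> hom G (product_group I H)"
    using assms(3) by (auto simp: hom_def Pi_iff)
  then show ?thesis
    using assms(1,2) by (simp add: group_hom_def group_hom_axioms_def)
qed

lemma kernel_restrict_product_group:
  "kernel G (product_group I H) (\<lambda>x. restrict (f x) I) = {x \<in> carrier G. \<forall>i\<in>I. f x i = \<one>\<^bsub>H i\<^esub>}"
  by (auto simp: kernel_def restrict_def fun_eq_iff)

lemma iso_imp_group_hom: "group G \<Longrightarrow> group H \<Longrightarrow> f \<in> iso G H \<Longrightarrow> group_hom G H f"
  by (simp add: group_hom_def group_hom_axioms_def iso_imp_homomorphism)

lemma finitely_generated_subgroup_image:
  assumes "group_hom G H f" "K \<subseteq> carrier G" "finitely_generated_subgroup G K"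
  shows "finitely_generated_subgroup H (f ` K)"
proof -
  obtain S where S: "finite S" "S \<subseteq> K" "generate G S = K"
    using assms(3) unfolding finitely_generated_subgroup_def by blast
  then have "generate H (f ` S) = f ` K"
    using group_hom.generate_img[OF assms(1)] assms(2) by auto
  then show ?thesis
    using S unfolding finitely_generated_subgroup_def by blast
qed

lemma finitely_generated_kernel_comp_iso:
  assumes "group G" "group G'" "\<phi> \<in> iso G G'" "finitely_generated_subgroup G' (kernel G' H h)"
  shows "finitely_generated_subgroup G (kernel G H (h \<circ> \<phi>))"
proof -
  let ?\<phi>' = "inv_into (carrier G) \<phi>"
  have bij: "bij_betw \<phi> (carrier G) (carrier G')"
    using assms(3) by (simp add: iso_def)
  have "group_hom G' G ?\<phi>'"
    using iso_imp_group_hom[OF assms(2,1) group.iso_set_sym[OF assms(1,3)]] .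
  moreover have "kernel G H (h \<circ> \<phi>) = ?\<phi>' ` kernel G' H h"
    using bij by (force simp: kernel_def bij_betw_def inv_into_into f_inv_into_f)
  ultimately show ?thesis
    using finitely_generated_subgroup_image assms(4) by (fastforce simp: kernel_def)
qed

lemma torsion_free_inj_hom:
  assumes "group_hom G H f" "inj_on f (carrier G)" "torsion_free H"
  shows "torsion_free G"
  unfolding torsion_free_def
proof (intro ballI allI impI)
  interpret f: group_hom G H f by (rule assms(1))
  fix x and n :: nat
  assume x: "x \<in> carrier G" and n: "0 < n \<and> x [^]\<^bsub>G\<^esub> n = \<one>\<^bsub>G\<^esub>"
  then have "f x [^]\<^bsub>H\<^esub> n = \<one>\<^bsub>H\<^esub>"
    by (simp flip: f.hom_nat_pow)
  then have "f x = \<one>\<^bsub>H\<^esub>"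
    using assms(3) n f.hom_closed[OF x] unfolding torsion_free_def by blast
  then have "f x = f \<one>\<^bsub>G\<^esub>"
    by simp
  then show "x = \<one>\<^bsub>G\<^esub>"
    using assms(2) x by (simp add: inj_on_def)
qed

lemma characteristic_subgroupI:
  assumes "group G" "subgroup K G" "\<And>\<phi>. \<phi> \<in> iso G G \<Longrightarrow> \<phi> ` K \<subseteq> K"
  shows "characteristic_subgroup G K"
  unfolding characteristic_subgroup_def
proof (intro conjI ballI assms(2) equalityI)
  fix \<phi> assume \<phi>: "\<phi> \<in> iso G G"
  show "\<phi> ` K \<subseteq> K" using assms(3)[OF \<phi>] .
  let ?\<phi>' = "inv_into (carrier G) \<phi>"
  have "\<phi> ` carrier G = carrier G"
    using \<phi> by (simp add: iso_iff)
  then have "K = \<phi> ` ?\<phi>' ` K"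
    using subgroup.subset[OF assms(2)] by (force simp: f_inv_into_f)
  also have "\<dots> \<subseteq> \<phi> ` K"
    using assms(3)[OF group.iso_set_sym[OF assms(1) \<phi>]] by blast
  finally show "K \<subseteq> \<phi> ` K" .
qed

lemma universal_hom_cocompact:
  assumes "universal_hom G U T \<rho>" "\<alpha> \<in> U"
  shows "cocompact_fuchsian (T \<alpha>)"
proof -
  have "\<forall>\<alpha>\<in>U. cocompact_fuchsian (T \<alpha>)"
    using assms(1) unfolding universal_hom_def by (elim conjE)
  then show ?thesis using assms(2) ..
qed

lemma universal_hom_group_factor:
  assumes "universal_hom G U T \<rho>" "\<alpha> \<in> U"
  shows "group (Fuchs (T \<alpha>))"
  using group_Fuchs[OF universal_hom_cocompact[OF assms]] .

lemma universal_hom_hom: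
  assumes "universal_hom G U T \<rho>"
  shows "\<rho> \<in> hom G (target_group U T)"
  using assms unfolding universal_hom_def by (elim conjE)

lemma universal_hom_component_epi:
  assumes "universal_hom G U T \<rho>" "\<alpha> \<in> U"
  shows "(\<lambda>x. \<rho> x \<alpha>) \<in> epi G (Fuchs (T \<alpha>))"
proof -
  have "\<rho> \<in> hom G (product_group U (\<lambda>\<alpha>. Fuchs (T \<alpha>)))"
    using universal_hom_hom[OF assms(1)] by (simp add: target_group_def)
  moreover have "\<forall>\<alpha>\<in>U. (\<lambda>x. \<rho> x \<alpha>) ` carrier G = T \<alpha>"
    using assms(1) unfolding universal_hom_def by (elim conjE)
  ultimately show ?thesis
    using hom_product_group_component assms(2) by (fastforce simp: epi_def)
qed

lemma universal_hom_finitely_generated_kernel_iff: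
  assumes "universal_hom G U T \<rho>" "cocompact_fuchsian \<Gamma>" "\<sigma> \<in> epi G (Fuchs \<Gamma>)"
  shows "finitely_generated_subgroup G (kernel G (Fuchs \<Gamma>) \<sigma>) \<longleftrightarrow>
    (\<exists>\<alpha>\<in>U. \<exists>\<psi>\<in>iso (Fuchs (T \<alpha>)) (Fuchs \<Gamma>). \<forall>x\<in>carrier G. \<sigma> x = \<psi> (\<rho> x \<alpha>))"
proof -
  have "\<forall>\<Gamma> \<sigma>. cocompact_fuchsian \<Gamma> \<and> \<sigma> \<in> epi G (Fuchs \<Gamma>) \<longrightarrow>
        (finitely_generated_subgroup G (kernel G (Fuchs \<Gamma>) \<sigma>) \<longleftrightarrow>
         (\<exists>\<alpha>\<in>U. \<exists>\<psi>\<in>iso (Fuchs (T \<alpha>)) (Fuchs \<Gamma>). \<forall>x\<in>carrier G. \<sigma> x = \<psi> (\<rho> x \<alpha>)))"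
    using assms(1) unfolding universal_hom_def by (elim conjE)
  then show ?thesis using assms(2,3) by blast
qed

lemma universal_hom_comp_automorphism:
  assumes G: "group G" and u: "universal_hom G U T \<rho>" and \<phi>: "\<phi> \<in> iso G G" and \<alpha>: "\<alpha> \<in> U"
  obtains \<beta> \<psi> where "\<beta> \<in> U" "\<psi> \<in> iso (Fuchs (T \<beta>)) (Fuchs (T \<alpha>))"
    "\<And>x. x \<in> carrier G \<Longrightarrow> \<rho> (\<phi> x) \<alpha> = \<psi> (\<rho> x \<beta>)"
proof -
  let ?\<rho>\<^sub>\<alpha> = "\<lambda>x. \<rho> x \<alpha>"
  have cc: "cocompact_fuchsian (T \<alpha>)"
    using universal_hom_cocompact[OF u \<alpha>] .
  note fg_kernel_iff = universal_hom_finitely_generated_kernel_iff[OF u cc]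
  have epi: "?\<rho>\<^sub>\<alpha> \<in> epi G (Fuchs (T \<alpha>))"
    using universal_hom_component_epi[OF u \<alpha>] .
  \<comment> \<open>the characterisation applied to \<open>\<rho>\<^sub>\<alpha>\<close> itself, with \<open>\<psi>\<close> the identity\<close>
  have "\<exists>\<beta>\<in>U. \<exists>\<psi>\<in>iso (Fuchs (T \<beta>)) (Fuchs (T \<alpha>)). \<forall>x\<in>carrier G. \<rho> x \<alpha> = \<psi> (\<rho> x \<beta>)"
    by (intro bexI[OF _ \<alpha>] bexI[OF _ iso_set_refl]) simp
  then have "finitely_generated_subgroup G (kernel G (Fuchs (T \<alpha>)) ?\<rho>\<^sub>\<alpha>)"
    using fg_kernel_iff[OF epi] by blast
  then have "finitely_generated_subgroup G (kernel G (Fuchs (T \<alpha>)) (?\<rho>\<^sub>\<alpha> \<circ> \<phi>))"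
    by (rule finitely_generated_kernel_comp_iso[OF G G \<phi>])
  moreover have "?\<rho>\<^sub>\<alpha> \<circ> \<phi> \<in> epi G (Fuchs (T \<alpha>))"
    using epi_compose[OF _ epi] \<phi> iso_iff_mon_epi by blast
  ultimately have "\<exists>\<beta>\<in>U. \<exists>\<psi>\<in>iso (Fuchs (T \<beta>)) (Fuchs (T \<alpha>)). \<forall>x\<in>carrier G. \<rho> (\<phi> x) \<alpha> = \<psi> (\<rho> x \<beta>)"
    using fg_kernel_iff by (simp add: comp_def)
  then show thesis
    using that by blast
qed

lemma characteristic_kernel_restrict_universal_hom:
  assumes G: "group G" and u: "universal_hom G U T \<rho>" and V: "V \<subseteq> U"
    and iso_closed: "\<And>\<alpha> \<beta> \<psi>. \<alpha> \<in> V \<Longrightarrow> \<beta> \<in> U \<Longrightarrow> \<psi> \<in> iso (Fuchs (T \<beta>)) (Fuchs (T \<alpha>)) \<Longrightarrow> \<beta> \<in> V"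
  shows "characteristic_subgroup G (kernel G (target_group V T) (\<lambda>x. restrict (\<rho> x) V))"
proof (rule characteristic_subgroupI[OF G])
  have "group_hom G (target_group V T) (\<lambda>x. restrict (\<rho> x) V)"
    unfolding target_group_def
  proof (rule group_hom_restrict_product_group[OF G])
    fix \<alpha> assume "\<alpha> \<in> V"
    then show "group (Fuchs (T \<alpha>))" "(\<lambda>x. \<rho> x \<alpha>) \<in> hom G (Fuchs (T \<alpha>))"
      using universal_hom_group_factor[OF u] universal_hom_component_epi[OF u] V
      by (auto simp: epi_def)
  qed
  then show "subgroup (kernel G (target_group V T) (\<lambda>x. restrict (\<rho> x) V)) G"
    by (rule group_hom.subgroup_kernel)
next
  fix \<phi> assume \<phi>: "\<phi> \<in> iso G G"
  show "\<phi> ` kernel G (target_group V T) (\<lambda>x. restrict (\<rho> x) V)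
      \<subseteq> kernel G (target_group V T) (\<lambda>x. restrict (\<rho> x) V)"
    unfolding target_group_def kernel_restrict_product_group
  proof (rule image_subsetI, intro CollectI conjI ballI)
    fix x assume x: "x \<in> {x \<in> carrier G. \<forall>\<beta>\<in>V. \<rho> x \<beta> = \<one>\<^bsub>Fuchs (T \<beta>)\<^esub>}"
    then show "\<phi> x \<in> carrier G"
      using \<phi> by (auto simp: iso_iff)
    fix \<alpha> assume \<alpha>: "\<alpha> \<in> V"
    obtain \<beta> \<psi> where \<beta>: "\<beta> \<in> U" and \<psi>: "\<psi> \<in> iso (Fuchs (T \<beta>)) (Fuchs (T \<alpha>))"
      and comp: "\<And>y. y \<in> carrier G \<Longrightarrow> \<rho> (\<phi> y) \<alpha> = \<psi> (\<rho> y \<beta>)"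
      using universal_hom_comp_automorphism[OF G u \<phi>] \<alpha> V by blast
    have "\<rho> x \<beta> = \<one>\<^bsub>Fuchs (T \<beta>)\<^esub>"
      using x iso_closed[OF \<alpha> \<beta> \<psi>] by blast
    moreover have "group_hom (Fuchs (T \<beta>)) (Fuchs (T \<alpha>)) \<psi>"
      using iso_imp_group_hom[OF universal_hom_group_factor[OF u \<beta>] _ \<psi>]
        universal_hom_group_factor[OF u] \<alpha> V by blast
    ultimately show "\<rho> (\<phi> x) \<alpha> = \<one>\<^bsub>Fuchs (T \<alpha>)\<^esub>"
      using comp x by (simp add: group_hom.hom_one)
  qed
qed

lemma kernel_universal_hom_eq_restrict:
  assumes "universal_hom G U T \<rho>"
  shows "kernel G (target_group U T) \<rho> = kernel G (target_group U T) (\<lambda>x. restrict (\<rho> x) U)"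
proof -
  have "restrict (\<rho> x) U = \<rho> x" if "x \<in> carrier G" for x
    using hom_in_carrier[OF universal_hom_hom[OF assms] that]
    by (simp add: target_group_def PiE_restrict)
  then show ?thesis
    unfolding kernel_def by (simp cong: conj_cong)
qed

lemma tf_index_iso_closed:
  assumes \<alpha>: "\<alpha> \<in> tf_index U T" and \<beta>: "\<beta> \<in> U"
    and "cocompact_fuchsian (T \<alpha>)" "cocompact_fuchsian (T \<beta>)"
    and \<psi>: "\<psi> \<in> iso (Fuchs (T \<beta>)) (Fuchs (T \<alpha>))"
  shows "\<beta> \<in> tf_index U T"
proof -
  have "torsion_free (Fuchs (T \<beta>))"
  proof (rule torsion_free_inj_hom)
    show "group_hom (Fuchs (T \<beta>)) (Fuchs (T \<alpha>)) \<psi>"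
      using iso_imp_group_hom[OF group_Fuchs[OF assms(4)] group_Fuchs[OF assms(3)] \<psi>] .
    show "inj_on \<psi> (carrier (Fuchs (T \<beta>)))"
      using \<psi> by (simp add: iso_iff)
    show "torsion_free (Fuchs (T \<alpha>))"
      using \<alpha> by (simp add: tf_index_def)
  qed
  then show ?thesis
    using \<beta> by (simp add: tf_index_def)
qed

theorem lemma2p2:
  fixes G :: "('a, 'b) monoid_scheme"
    and U :: "'i set"
    and T :: "'i \<Rightarrow> (real^2^2) set set"
    and \<rho> :: "'a \<Rightarrow> 'i \<Rightarrow> (real^2^2) set"
  assumes "group G"
    and "universal_hom G U T \<rho>"
  shows "characteristic_subgroup G (kernel G (target_group U T) \<rho>) \<and>
         characteristic_subgroup G
           (kernel G (target_group (tf_index U T) T) (tf_hom U T \<rho>))"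
proof
  show "characteristic_subgroup G (kernel G (target_group U T) \<rho>)"
    using characteristic_kernel_restrict_universal_hom[OF assms]
    by (simp add: kernel_universal_hom_eq_restrict[OF assms(2)])
next
  have "\<beta> \<in> tf_index U T"
    if "\<alpha> \<in> tf_index U T" "\<beta> \<in> U" "\<psi> \<in> iso (Fuchs (T \<beta>)) (Fuchs (T \<alpha>))" for \<alpha> \<beta> \<psi>
    using that universal_hom_cocompact[OF assms(2)]
    by (intro tf_index_iso_closed[OF that(1)]) (auto simp: tf_index_def)
  moreover have "tf_index U T \<subseteq> U"
    by (auto simp: tf_index_def)
  ultimately show "characteristic_subgroup G
      (kernel G (target_group (tf_index U T) T) (tf_hom U T \<rho>))"
    unfolding tf_hom_def using characteristic_kernel_restrict_universal_hom[OF assms] by blast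
qed

end
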